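(* The subspace $\mathfrak t_0=\mathrm{span}\{H_1,H_2,Z,\tilde r_1,\tilde r_2\}$ is an abelian Lie subalgebra of $\mathfrak O_\kappa$, i.e. the elements $H_1,H_2,Z,\tilde r_1,\tilde r_2$ of $\mathfrak O_\kappa$ pairwise commute.
   Context: Let $V_{\mathbb R}=\mathbb R^4$ with standard inner product $(\cdot,\cdot)$ and orthonormal basis $x_1,\dots,x_4$; $V=\mathbb C^4$ with bilinear extension; $B(x)(y)=(x,y)$. Fix positive integers $m_1,m_2$. $R\subset V_\mathbb R$ consists of $\alpha_p=(\sin(p\pi/m_1),-\cos(p\pi/m_1),0,0)$ ($p=1,\dots,2m_1$) and $\beta_q=(0,0,\sin(q\pi/m_2),-\cos(q\pi/m_2))$ ($q=1,\dots,2m_2$); $R_+=\{\alpha_1,\dots,\alpha_{m_1},\beta_1,\dots,\beta_{m_2}\}$; reflections $s_\alpha(x)=x-2\frac{(x,\alpha)}{(\alpha,\alpha)}\alpha$ generate $W\cong D_{2m_1}\times D_{2m_2}$. $\kappa:R\to\mathbb C$ is $W$-invariant. $H_\kappa$: quotient of $T(V\oplus V^* )\rtimes\mathbb CW$ by $[x,y]=0=[\xi,\eta]$, $[\xi,x]=\xi(x)+\sum_{\alpha\in R_+}\frac{2\kappa_\alpha}{(\alpha,\alpha)}(B^{-1}(\xi),\alpha)(x,\alpha)s_\alpha$. $\mathcal C$: Clifford algebra on $e_1,\dots,e_4$ ($e_je_k+e_ke_j=2\delta_{jk}$, $e_j$ odd); $\gamma:\bigwedge V\to\mathcal C$ antisymmetrisation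 ($\gamma(x_j)=e_j$, $\gamma(v_1\wedge\cdots\wedge v_p)=\frac1{p!}\sum_{g\in S_p}\mathrm{sgn}(g)\gamma(v_{g(1)})\cdots\gamma(v_{g(p)})$). On $H_\kappa\otimes\mathcal C$ (graded via $\mathcal C$): $[\![a,b]\!]=ab-(-1)^{|a||b|}ba$. With $\xi_j=B(x_j)$, $\underline D=\sum\xi_j\otimes e_j$, $\underline x=\sum x_j\otimes e_j$, $\Delta_\kappa=\sum\xi_j^2$, $|x|^2=\sum x_j^2$, $E=\frac12\sum(x_j\xi_j+\xi_jx_j)$ span $\mathfrak g$; $\mathfrak O_\kappa$ is the graded centraliser of $\mathfrak g$ in $H_\kappa\otimes\mathcal C$. $\tilde W\subset\mathcal C^\times$ generated by the $\gamma(\alpha)$, $\alpha\in R$, is embedded in $\mathfrak O_\kappa$ by $\tilde w\mapsto\pi(\tilde w)\otimes\tilde w$ ($\pi(\gamma(\alpha))=s_\alpha$); $\tilde s_p,\tilde t_q$ images of $\gamma(\alpha_p),\gamma(\beta_q)$; $\tilde r_1=-\tilde s_{m_1}\tilde s_1$, $\tilde r_2=-\tilde t_{m_2}\tilde t_1$. $O(v)=-\frac12P(\gamma(v))$ with $P=\mathrm{id}-\frac12\mathrm{ad}(\underline D)\mathrm{ad}(\underline x)$, $\mathrm{ad}(a)b=[\![a,b]\!]$; $z_a^\pm=x_{2a-1}\pm ix_{2a}$. $H_a=\frac12O(z_a^+\wedge z_a^-)$ ($a=1,2$), $Z=O(x_1\wedge x_2\wedge x_3\wedge x_4)$. *)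

theory Defs
  imports Complex_Main "HOL-Combinatorics.Permutations"
begin

text \<open>Vectors of V_R = R^4 are functions nat => real supported on {1..4};
  4x4 matrices are functions nat => nat => real supported on {1..4} x {1..4}.\<close>

definition inner4 :: "(nat \<Rightarrow> real) \<Rightarrow> (nat \<Rightarrow> real) \<Rightarrow> real" where
  "inner4 u v = (\<Sum>j\<in>{1..4}. u j * v j)"

definition alpha :: "nat \<Rightarrow> nat \<Rightarrow> nat \<Rightarrow> real" where
  "alpha m1 p = (\<lambda>j. if j = 1 then sin (real p * pi / real m1)
                     else if j = 2 then - cos (real p * pi / real m1) else 0)"

definition beta :: "nat \<Rightarrow> nat \<Rightarrow> nat \<Rightarrow> real" where
  "beta m2 q = (\<lambda>j. if j = 3 then sin (real q * pi / real m2)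
                     else if j = 4 then - cos (real q * pi / real m2) else 0)"

definition roots :: "nat \<Rightarrow> nat \<Rightarrow> (nat \<Rightarrow> real) set" where
  "roots m1 m2 = {alpha m1 p | p. p \<in> {1..2*m1}} \<union> {beta m2 q | q. q \<in> {1..2*m2}}"

definition pos_roots :: "nat \<Rightarrow> nat \<Rightarrow> (nat \<Rightarrow> real) set" where
  "pos_roots m1 m2 = {alpha m1 p | p. p \<in> {1..m1}} \<union> {beta m2 q | q. q \<in> {1..m2}}"

definition id4 :: "nat \<Rightarrow> nat \<Rightarrow> real" where
  "id4 i j = (if i \<in> {1..4} \<and> j \<in> {1..4} \<and> i = j then 1 else 0)"

definition mat_mul :: "(nat \<Rightarrow> nat \<Rightarrow> real) \<Rightarrow> (nat \<Rightarrow> nat \<Rightarrow> real) \<Rightarrow> nat \<Rightarrow> nat \<Rightarrow> real" where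
  "mat_mul A B i j = (\<Sum>k\<in>{1..4}. A i k * B k j)"

definition mat_vec :: "(nat \<Rightarrow> nat \<Rightarrow> real) \<Rightarrow> (nat \<Rightarrow> real) \<Rightarrow> nat \<Rightarrow> real" where
  "mat_vec A v i = (\<Sum>k\<in>{1..4}. A i k * v k)"

text \<open>Matrix of the reflection s_alpha(x) = x - 2 (x,alpha)/(alpha,alpha) alpha.\<close>
definition refl_mat :: "(nat \<Rightarrow> real) \<Rightarrow> nat \<Rightarrow> nat \<Rightarrow> real" where
  "refl_mat a i j = (if i \<in> {1..4} \<and> j \<in> {1..4}
      then (if i = j then 1 else 0) - 2 * a i * a j / inner4 a a else 0)"

inductive_set weyl :: "nat \<Rightarrow> nat \<Rightarrow> (nat \<Rightarrow> nat \<Rightarrow> real) set" for m1 m2 where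
  weyl_id: "id4 \<in> weyl m1 m2"
| weyl_refl: "w \<in> weyl m1 m2 \<Longrightarrow> a \<in> roots m1 m2 \<Longrightarrow> mat_mul (refl_mat a) w \<in> weyl m1 m2"

text \<open>An identity holds in H_kappa (x) C iff it holds in every complex algebra generated by
  elements satisfying the defining relations (universal property of the presentation).
  A complex algebra is a ring 'a with a central ring homomorphism c from the complex numbers.
  x j = image of x_j, xi j = image of xi_j = B(x_j), g w = image of w in W,
  e j = image of 1 (x) e_j.  H_kappa is purely even, so e_j commutes with its image.\<close>

definition CH_model ::
  "nat \<Rightarrow> nat \<Rightarrow> ((nat \<Rightarrow> real) \<Rightarrow> complex) \<Rightarrow> (complex \<Rightarrow> 'a::ring_1) \<Rightarrow>
   (nat \<Rightarrow> 'a) \<Rightarrow> (nat \<Rightarrow> 'a) \<Rightarrow> ((nat \<Rightarrow> nat \<Rightarrow> real) \<Rightarrow> 'a) \<Rightarrow> (nat \<Rightarrow> 'a) \<Rightarrow> bool" where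
  "CH_model m1 m2 \<kappa> c x xi g e \<longleftrightarrow>
     (\<forall>a b. c (a + b) = c a + c b) \<and> (\<forall>a b. c (a * b) = c a * c b) \<and> c 1 = 1 \<and>
     (\<forall>a y. c a * y = y * c a) \<and>
     (\<forall>j\<in>{1..4}. \<forall>k\<in>{1..4}. x j * x k = x k * x j) \<and>
     (\<forall>j\<in>{1..4}. \<forall>k\<in>{1..4}. xi j * xi k = xi k * xi j) \<and>
     (\<forall>j\<in>{1..4}. \<forall>k\<in>{1..4}. xi j * x k - x k * xi j =
        (if j = k then 1 else 0) +
        (\<Sum>a\<in>pos_roots m1 m2. c (2 * \<kappa> a / complex_of_real (inner4 a a)
              * complex_of_real (a j) * complex_of_real (a k)) * g (refl_mat a))) \<and>
     g id4 = 1 \<and>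
     (\<forall>w\<in>weyl m1 m2. \<forall>w'\<in>weyl m1 m2. g (mat_mul w w') = g w * g w') \<and>
     (\<forall>w\<in>weyl m1 m2. \<forall>j\<in>{1..4}.
        g w * x j = (\<Sum>k\<in>{1..4}. c (complex_of_real (w k j)) * x k) * g w) \<and>
     (\<forall>w\<in>weyl m1 m2. \<forall>j\<in>{1..4}.
        g w * xi j = (\<Sum>k\<in>{1..4}. c (complex_of_real (w k j)) * xi k) * g w) \<and>
     (\<forall>j\<in>{1..4}. \<forall>k\<in>{1..4}. e j * e k + e k * e j = (if j = k then 2 else 0)) \<and>
     (\<forall>j\<in>{1..4}. \<forall>k\<in>{1..4}. e j * x k = x k * e j \<and> e j * xi k = xi k * e j) \<and>
     (\<forall>j\<in>{1..4}. \<forall>w\<in>weyl m1 m2. e j * g w = g w * e j)"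

text \<open>gamma on V (complex vectors given by coordinates) and on decomposable p-vectors.\<close>
definition gvec :: "(complex \<Rightarrow> 'a::ring_1) \<Rightarrow> (nat \<Rightarrow> 'a) \<Rightarrow> (nat \<Rightarrow> complex) \<Rightarrow> 'a" where
  "gvec c e v = (\<Sum>j\<in>{1..4}. c (v j) * e j)"

definition gwedge :: "(complex \<Rightarrow> 'a::ring_1) \<Rightarrow> (nat \<Rightarrow> 'a) \<Rightarrow> (nat \<Rightarrow> complex) list \<Rightarrow> 'a" where
  "gwedge c e vs = c (1 / of_nat (fact (length vs))) *
     (\<Sum>\<sigma>\<in>{\<sigma>. \<sigma> permutes {0..<length vs}}.
        c (of_int (sign \<sigma>)) * prod_list (map (\<lambda>i. gvec c e (vs ! \<sigma> i)) [0..<length vs]))"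

definition xu :: "(nat \<Rightarrow> 'a::ring_1) \<Rightarrow> (nat \<Rightarrow> 'a) \<Rightarrow> 'a" where
  "xu x e = (\<Sum>j\<in>{1..4}. x j * e j)"

definition Du :: "(nat \<Rightarrow> 'a::ring_1) \<Rightarrow> (nat \<Rightarrow> 'a) \<Rightarrow> 'a" where
  "Du xi e = (\<Sum>j\<in>{1..4}. xi j * e j)"

text \<open>Graded commutator of homogeneous elements; parity True = odd.\<close>
definition gcomm :: "'a::ring_1 \<Rightarrow> bool \<Rightarrow> 'a \<Rightarrow> bool \<Rightarrow> 'a" where
  "gcomm a pa b pb = (if pa \<and> pb then a * b + b * a else a * b - b * a)"

definition Pop :: "(complex \<Rightarrow> 'a::ring_1) \<Rightarrow> (nat \<Rightarrow> 'a) \<Rightarrow> (nat \<Rightarrow> 'a) \<Rightarrow> (nat \<Rightarrow> 'a) \<Rightarrow> 'a \<Rightarrow> bool \<Rightarrow> 'a" where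
  "Pop c x xi e y py = y - c (1/2) * gcomm (Du xi e) True (gcomm (xu x e) True y py) (\<not> py)"

text \<open>O(v1 /\ ... /\ vp) = -1/2 P(gamma(v1 /\ ... /\ vp)); gamma of a p-vector has parity p mod 2.\<close>
definition Oop :: "(complex \<Rightarrow> 'a::ring_1) \<Rightarrow> (nat \<Rightarrow> 'a) \<Rightarrow> (nat \<Rightarrow> 'a) \<Rightarrow> (nat \<Rightarrow> 'a) \<Rightarrow> (nat \<Rightarrow> complex) list \<Rightarrow> 'a" where
  "Oop c x xi e vs = - (c (1/2) * Pop c x xi e (gwedge c e vs) (odd (length vs)))"

definition zplus :: "nat \<Rightarrow> nat \<Rightarrow> complex" where
  "zplus a = (\<lambda>j. if j = 2*a - 1 then 1 else if j = 2*a then \<i> else 0)"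

definition zminus :: "nat \<Rightarrow> nat \<Rightarrow> complex" where
  "zminus a = (\<lambda>j. if j = 2*a - 1 then 1 else if j = 2*a then - \<i> else 0)"

definition basisv :: "nat \<Rightarrow> nat \<Rightarrow> complex" where
  "basisv i = (\<lambda>j. if j = i then 1 else 0)"

text \<open>Image of gamma(alpha) in W~ inside H (x) C: pi(gamma(alpha)) (x) gamma(alpha) = s_alpha (x) gamma(alpha).\<close>
definition stilde :: "(complex \<Rightarrow> 'a::ring_1) \<Rightarrow> ((nat \<Rightarrow> nat \<Rightarrow> real) \<Rightarrow> 'a) \<Rightarrow> (nat \<Rightarrow> 'a) \<Rightarrow> (nat \<Rightarrow> real) \<Rightarrow> 'a" where
  "stilde c g e a = g (refl_mat a) * gvec c e (\<lambda>j. complex_of_real (a j))"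

end

theory Submission
  imports Defs
begin

text \<open>
  Write X_a, D_a for the components of the vectors x and D in the plane of the a-th dihedral
  factor (coordinates 1, 2 resp. 3, 4), N_a = e_(2a-1) e_(2a) and E = e_1 e_2 e_3 e_4.
  Since N_a anticommutes with X_a, D_a and commutes with the other plane, P(N_a) = (1 - [D_a, X_a]) N_a
  and H_a = (i/2) (1 - [D_a, X_a]) N_a; likewise Z = -(1/2) (1 - [D, X]) E.
  The heart of the matter is that (1 - [D_a, X_a]) N_a commutes with X_a and D_a.  This is the
  sl(2) relation {[D_a, X_a], X_a} = 2 X_a (and its analogue for D_a), which reduces to
  [D_a, |x_a|^2] = 2 X_a: the reflection terms of the Dunkl relations cancel because every root lies
  in one of the two planes and s_alpha negates (alpha, x).
  Everything else is sign bookkeeping in the Clifford algebra: s_alpha gamma(alpha) anticommutes with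
  X_a, D_a and E and has a definite sign against N_a, so a product of two of them commutes with
  H_1, H_2 and Z, and the factors of r_1 anticommute with those of r_2.
\<close>

section \<open>Commutation up to sign\<close>

text \<open>
  The introduction rules below compute the sign of a commutation relation between composite
  elements from the signs of their factors: backward resolution decomposes the right argument first,
  then the left one, down to known relations; the parity side conditions are discharged by the
  truth table of exclusive or, the remaining ones (index ranges, distinctness) by the simplifier.
  Hypotheses are supplied with insert rather than using, since rule would consume chained facts.
\<close>

definition signed_commute :: "bool \<Rightarrow> 'a::ring_1 \<Rightarrow> 'a \<Rightarrow> bool" where
  "signed_commute b y z \<longleftrightarrow> y * z = (if b then - (z * y) else z * y)"

lemma signed_commute_False: "signed_commute False y z \<longleftrightarrow> y * z = z * y"
  by (simp add: signed_commute_def)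

lemma signed_commute_True: "signed_commute True y z \<longleftrightarrow> y * z = - (z * y)"
  by (simp add: signed_commute_def)

lemma signed_commute_sym: "signed_commute b y z \<Longrightarrow> signed_commute b z y"
  by (cases b) (auto simp: signed_commute_def)

lemma signed_commute_mult_right:
  "signed_commute b1 y a \<Longrightarrow> signed_commute b2 y c \<Longrightarrow> b = (b1 \<noteq> b2) \<Longrightarrow> signed_commute b y (a * c)"
  unfolding signed_commute_def
  by (cases b1; cases b2) (auto simp: mult.assoc[symmetric], auto simp: mult.assoc)

lemma signed_commute_mult_left:
  "signed_commute b1 a y \<Longrightarrow> signed_commute b2 c y \<Longrightarrow> b = (b1 \<noteq> b2) \<Longrightarrow> signed_commute b (a * c) y"
  by (rule signed_commute_sym, rule signed_commute_mult_right[OF signed_commute_sym signed_commute_sym])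

lemma signed_commute_add_right:
  "signed_commute b1 y a \<Longrightarrow> signed_commute b2 y c \<Longrightarrow> b = b1 \<Longrightarrow> b1 = b2 \<Longrightarrow> signed_commute b y (a + c)"
  unfolding signed_commute_def by (cases b) (auto simp: algebra_simps)

lemma signed_commute_add_left:
  "signed_commute b1 a y \<Longrightarrow> signed_commute b2 c y \<Longrightarrow> b = b1 \<Longrightarrow> b1 = b2 \<Longrightarrow> signed_commute b (a + c) y"
  by (rule signed_commute_sym, rule signed_commute_add_right[OF signed_commute_sym signed_commute_sym])

lemma signed_commute_diff_right:
  "signed_commute b1 y a \<Longrightarrow> signed_commute b2 y c \<Longrightarrow> b = b1 \<Longrightarrow> b1 = b2 \<Longrightarrow> signed_commute b y (a - c)"
  unfolding signed_commute_def by (cases b) (auto simp: algebra_simps)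

lemma signed_commute_diff_left:
  "signed_commute b1 a y \<Longrightarrow> signed_commute b2 c y \<Longrightarrow> b = b1 \<Longrightarrow> b1 = b2 \<Longrightarrow> signed_commute b (a - c) y"
  by (rule signed_commute_sym, rule signed_commute_diff_right[OF signed_commute_sym signed_commute_sym])

lemma signed_commute_minus_right: "signed_commute b1 y a \<Longrightarrow> b = b1 \<Longrightarrow> signed_commute b y (- a)"
  unfolding signed_commute_def by (cases b) auto

lemma signed_commute_minus_left: "signed_commute b1 a y \<Longrightarrow> b = b1 \<Longrightarrow> signed_commute b (- a) y"
  by (rule signed_commute_sym, rule signed_commute_minus_right[OF signed_commute_sym])

lemma signed_commute_refl: "signed_commute False y y"
  by (simp add: signed_commute_def)

lemma signed_commute_one_right: "signed_commute False y 1"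
  and signed_commute_one_left: "signed_commute False 1 y"
  by (simp_all add: signed_commute_def)

lemma xor_values: "False = (False \<noteq> False)" "True = (False \<noteq> True)"
  "True = (True \<noteq> False)" "False = (True \<noteq> True)"
  by simp_all

lemmas signed_commute_intros =
  signed_commute_mult_right signed_commute_add_right signed_commute_diff_right signed_commute_minus_right
  signed_commute_one_right
  signed_commute_mult_left signed_commute_add_left signed_commute_diff_left signed_commute_minus_left
  signed_commute_one_left signed_commute_refl xor_values refl

lemma numeral_left_commute: "y * (numeral k * z) = numeral k * (y * (z::'a::semiring_1))"
  using mult_of_nat_commute[of "numeral k" y] by (simp add: mult.assoc[symmetric])

lemma anticommutator_of_commutator:
  fixes d z :: "'a::ring_1"
  shows "(d * z - z * d) * z + z * (d * z - z * d) = d * (z * z) - (z * z) * d"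
    and "(d * z - z * d) * d + d * (d * z - z * d) = (d * d) * z - z * (d * d)"
  by (simp_all add: algebra_simps)

lemma commute_one_minus_mult:
  fixes n z t :: "'a::ring_1"
  assumes "n * z = - (z * n)" and "t * z + z * t = 2 * z"
  shows "((1 - t) * n) * z = z * ((1 - t) * n)"
proof -
  have tz: "t * z = 2 * z - z * t"
    using assms(2) by (simp add: eq_diff_eq)
  have "((1 - t) * n) * z = t * z * n - z * n"
    using assms(1) by (simp add: algebra_simps)
  also have "\<dots> = z * ((1 - t) * n)"
    unfolding tz by (simp add: algebra_simps mult_2)
  finally show ?thesis .
qed

lemma anticommutator_commutator_split:
  fixes n z1 z2 d1 d2 :: "'a::ring_1"
  assumes "n * z1 = - (z1 * n)" "n * z2 = z2 * n" "n * d1 = - (d1 * n)" "n * d2 = d2 * n"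
    and "d2 * z1 = - (z1 * d2)"
  shows "(d1 + d2) * ((z1 + z2) * n - n * (z1 + z2)) + ((z1 + z2) * n - n * (z1 + z2)) * (d1 + d2)
    = 2 * ((d1 * z1 - z1 * d1) * n)"
proof -
  have comm: "(z1 + z2) * n - n * (z1 + z2) = 2 * (z1 * n)"
    using assms(1,2) by (simp add: algebra_simps mult_2)
  have "(d1 + d2) * (z1 * n) + (z1 * n) * (d1 + d2) = (d1 * z1 - z1 * d1) * n"
  proof -
    have "z1 * n * d1 = - (z1 * d1 * n)" "z1 * n * d2 = z1 * d2 * n" "d2 * z1 * n = - (z1 * d2 * n)"
      using assms(3-5) by (simp_all add: mult.assoc)
    then show ?thesis
      by (simp add: distrib_left distrib_right left_diff_distrib mult.assoc[symmetric])
  qed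
  then show ?thesis
    unfolding comm by (simp add: numeral_left_commute distrib_left[symmetric] mult.assoc)
qed

section \<open>Products of anticommuting elements\<close>

lemma mult_prod_list_anticommuting:
  fixes v :: "'a::ring_1"
  assumes "\<forall>y\<in>set ys. v * y = - (y * v)"
  shows "v * prod_list ys = (-1) ^ length ys * (prod_list ys * v)"
  using assms
proof (induction ys)
  case Nil
  then show ?case by simp
next
  case (Cons y ys)
  have "v * prod_list (y # ys) = - (y * (v * prod_list ys))"
    using Cons.prems by (simp add: mult.assoc[symmetric])
  also have "\<dots> = - (y * ((-1) ^ length ys * (prod_list ys * v)))"
    using Cons by simp
  also have "\<dots> = (-1) ^ length (y # ys) * (prod_list (y # ys) * v)"
    by (cases "even (length ys)") (simp_all add: mult.assoc)
  finally show ?case .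
qed

lemma upt_split_at_two:
  assumes "a < b" "b < n"
  shows "[0..<n] = [0..<a] @ a # [Suc a..<b] @ b # [Suc b..<n]"
proof -
  have app: "[i..<k] = [i..<j] @ [j..<k]" if "i \<le> j" "j \<le> k" for i j k :: nat
    using upt_add_eq_append[of i j "k - j"] that by simp
  have "[0..<n] = [0..<a] @ [a..<n]" "[a..<n] = [a..<b] @ [b..<n]"
    using assms by (simp_all add: app[of 0 a n] app[of a b n])
  then show ?thesis
    using assms by (simp add: upt_conv_Cons)
qed

lemma prod_list_transpose_anticommuting:
  fixes u :: "nat \<Rightarrow> 'a::ring_1"
  assumes anti: "\<And>i j. i < n \<Longrightarrow> j < n \<Longrightarrow> i \<noteq> j \<Longrightarrow> u i * u j = - (u j * u i)"
    and ab: "a < b" "b < n"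
  shows "prod_list (map (\<lambda>i. u (Transposition.transpose a b i)) [0..<n]) = - prod_list (map u [0..<n])"
proof -
  define Pm where "Pm = prod_list (map u [Suc a..<b])"
  define k where "k = length (map u [Suc a..<b])"
  have slide: "u i * Pm = (-1) ^ k * (Pm * u i)" if "i = a \<or> i = b" for i
  proof -
    have "\<forall>y\<in>set (map u [Suc a..<b]). u i * y = - (y * u i)"
      using that ab by (auto intro: anti)
    then show ?thesis
      unfolding Pm_def k_def by (rule mult_prod_list_anticommuting)
  qed
  have swap: "u b * (Pm * (u a * P3)) = - (u a * (Pm * (u b * P3)))" for P3
  proof -
    have "u b * (Pm * (u a * P3)) = (-1) ^ k * (Pm * (u b * u a)) * P3"
      by (simp add: slide mult.assoc[symmetric])
    also have "\<dots> = - ((-1) ^ k * (Pm * (u a * u b)) * P3)"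
      using ab by (simp add: anti[of b a])
    also have "\<dots> = - (u a * (Pm * (u b * P3)))"
      by (simp add: slide mult.assoc[symmetric])
    finally show ?thesis .
  qed
  have maps: "map (\<lambda>i. u (Transposition.transpose a b i)) [0..<a] = map u [0..<a]"
    "map (\<lambda>i. u (Transposition.transpose a b i)) [Suc a..<b] = map u [Suc a..<b]"
    "map (\<lambda>i. u (Transposition.transpose a b i)) [Suc b..<n] = map u [Suc b..<n]"
    using ab by (auto intro!: map_cong)
  show ?thesis
    using ab by (subst (1 2) upt_split_at_two[OF ab]) (simp add: maps Pm_def[symmetric] swap)
qed

lemma prod_list_permute_anticommuting:
  fixes u :: "nat \<Rightarrow> 'a::ring_1"
  assumes "\<sigma> permutes {0..<n}"
    and "\<And>i j. i < n \<Longrightarrow> j < n \<Longrightarrow> i \<noteq> j \<Longrightarrow> u i * u j = - (u j * u i)"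
  shows "prod_list (map (\<lambda>i. u (\<sigma> i)) [0..<n]) = of_int (sign \<sigma>) * prod_list (map u [0..<n])"
  using assms(1) finite_atLeastLessThan assms(2)
proof (induction arbitrary: u rule: permutes_induct)
  case id
  then show ?case by simp
next
  case (swap a b p)
  let ?t = "Transposition.transpose a b"
  define v where "v = (\<lambda>i. u (?t i))"
  have v_anti: "v i * v j = - (v j * v i)" if ij: "i < n" "j < n" "i \<noteq> j" for i j
  proof -
    have "?t i < n" "?t j < n"
      using ij swap.hyps(1,2) by (auto simp: transpose_def)
    moreover have "?t i \<noteq> ?t j"
      using ij by (metis transpose_eq_iff)
    ultimately show ?thesis
      unfolding v_def by (rule swap.prems)
  qed
  have v_prod: "prod_list (map v [0..<n]) = - prod_list (map u [0..<n])"
  proof (cases "a < b")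
    case True
    then show ?thesis
      unfolding v_def using swap.hyps(2)
      by (intro prod_list_transpose_anticommuting[OF swap.prems]) simp_all
  next
    case False
    then have "b < a" using swap.hyps(3) by simp
    then show ?thesis
      unfolding v_def transpose_commute[of a b] using swap.hyps(1)
      by (intro prod_list_transpose_anticommuting[OF swap.prems]) simp_all
  qed
  have sign: "sign (?t \<circ> p) = - sign p"
    using swap.hyps permutes_imp_permutation[OF finite_atLeastLessThan swap.hyps(4)]
    by (simp add: sign_compose sign_swap_id permutation_swap_id)
  have "prod_list (map (\<lambda>i. u ((?t \<circ> p) i)) [0..<n]) = prod_list (map (\<lambda>i. v (p i)) [0..<n])"
    by (simp add: v_def)
  also have "\<dots> = of_int (sign p) * prod_list (map v [0..<n])"
    by (rule swap.IH) (rule v_anti)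
  also have "\<dots> = of_int (sign (?t \<circ> p)) * prod_list (map u [0..<n])"
    by (simp add: v_prod sign)
  finally show ?case .
qed

lemma permutations_of_two: "{\<sigma>. \<sigma> permutes {0..<2::nat}} = {id, Transposition.transpose 0 1}"
proof -
  have "{0..<2::nat} = insert 0 {1}" by auto
  then have "{\<sigma>. \<sigma> permutes {0..<2::nat}} =
      (\<lambda>(b, p). Transposition.transpose 0 b \<circ> p) ` {(b, p). b \<in> {0, 1} \<and> p = id}"
    by (simp add: permutes_insert)
  also have "{(b, p). b \<in> {0::nat, 1} \<and> p = id} = {(0, id), (1, id)}"
    by auto
  finally show ?thesis by simp
qed

section \<open>Roots and reflections\<close>

lemma atLeastAtMost_1_4: "{1..4::nat} = {1, 2, 3, 4}"
  by auto

lemma sum_1_to_4: "(\<Sum>j\<in>{1..4::nat}. f j) = f 1 + f 2 + f 3 + f 4"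
  unfolding atLeastAtMost_1_4 by (simp add: add.assoc)

lemma inner4_alpha: "inner4 (alpha m p) (alpha m p) = 1"
  and inner4_beta: "inner4 (beta m p) (beta m p) = 1"
  unfolding inner4_def sum_1_to_4 alpha_def beta_def
  by (simp_all add: power2_eq_square[symmetric])

lemma roots_unit: "a \<in> roots m1 m2 \<Longrightarrow> inner4 a a = 1"
  unfolding roots_def by (auto simp: inner4_alpha inner4_beta)

lemma roots_block_cases: "a \<in> roots m1 m2 \<Longrightarrow> (a 3 = 0 \<and> a 4 = 0) \<or> (a 1 = 0 \<and> a 2 = 0)"
  unfolding roots_def by (auto simp: alpha_def beta_def)

lemma pos_roots_subset_roots: "pos_roots m1 m2 \<subseteq> roots m1 m2"
  unfolding pos_roots_def roots_def by auto

lemma refl_mat_unit: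
  "inner4 a a = 1 \<Longrightarrow> refl_mat a k j =
     (if k \<in> {1..4} \<and> j \<in> {1..4} then (if k = j then 1 else 0) - 2 * a k * a j else 0)"
  by (simp add: refl_mat_def)

lemma mat_mul_id4_right: "mat_mul (refl_mat a) id4 = refl_mat a"
proof (intro ext)
  fix i j
  show "mat_mul (refl_mat a) id4 i j = refl_mat a i j"
  proof (cases "j \<in> {1..4}")
    case True
    then have "mat_mul (refl_mat a) id4 i j = (\<Sum>k\<in>{1..4}. if k = j then refl_mat a i k else 0)"
      unfolding mat_mul_def id4_def by (intro sum.cong) auto
    then show ?thesis using True by simp
  next
    case False
    then have "mat_mul (refl_mat a) id4 i j = 0"
      unfolding mat_mul_def id4_def by (intro sum.neutral) auto
    moreover have "refl_mat a i j = 0"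
      using False unfolding refl_mat_def by auto
    ultimately show ?thesis by simp
  qed
qed

lemma refl_mat_in_weyl: "a \<in> roots m1 m2 \<Longrightarrow> refl_mat a \<in> weyl m1 m2"
  using weyl_refl[OF weyl_id, of a m1 m2] by (simp add: mat_mul_id4_right)

lemma refl_mat_mul_commute:
  assumes "inner4 a a = 1" "inner4 b b = 1" "a 3 = 0" "a 4 = 0" "b 1 = 0" "b 2 = 0"
  shows "mat_mul (refl_mat a) (refl_mat b) = mat_mul (refl_mat b) (refl_mat a)"
proof (intro ext)
  fix i j :: nat
  show "mat_mul (refl_mat a) (refl_mat b) i j = mat_mul (refl_mat b) (refl_mat a) i j"
  proof (cases "i \<in> {1..4} \<and> j \<in> {1..4}")
    case True
    then have "i = 1 \<or> i = 2 \<or> i = 3 \<or> i = 4" "j = 1 \<or> j = 2 \<or> j = 3 \<or> j = 4"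
      by auto
    then show ?thesis
      unfolding mat_mul_def sum_1_to_4 refl_mat_unit[OF assms(1)] refl_mat_unit[OF assms(2)]
      using assms(3-) by (elim disjE) simp_all
  next
    case False
    then show ?thesis
      unfolding mat_mul_def refl_mat_unit[OF assms(1)] refl_mat_unit[OF assms(2)] by auto
  qed
qed

definition block_pair :: "nat \<Rightarrow> nat \<Rightarrow> bool" where
  "block_pair p q \<longleftrightarrow> (p = 1 \<and> q = 2) \<or> (p = 3 \<and> q = 4)"

definition blocks :: "nat \<Rightarrow> nat \<Rightarrow> nat \<Rightarrow> nat \<Rightarrow> bool" where
  "blocks p q r s \<longleftrightarrow> (p = 1 \<and> q = 2 \<and> r = 3 \<and> s = 4) \<or> (p = 3 \<and> q = 4 \<and> r = 1 \<and> s = 2)"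

lemma blocks_block_pair: "blocks p q r s \<Longrightarrow> block_pair p q \<and> block_pair r s"
  unfolding blocks_def block_pair_def by auto

lemma block_pair_indices: "block_pair p q \<Longrightarrow> p \<in> {1..4} \<and> q \<in> {1..4} \<and> p \<noteq> q"
  unfolding block_pair_def by auto

lemma root_block_support:
  assumes "a \<in> roots m1 m2" "block_pair p q"
  shows "(\<forall>j\<in>{1..4}. j \<noteq> p \<longrightarrow> j \<noteq> q \<longrightarrow> a j = 0) \<or> (a p = 0 \<and> a q = 0)"
  using roots_block_cases[OF assms(1)] assms(2) unfolding block_pair_def atLeastAtMost_1_4 by auto

section \<open>Models of the Cherednik--Clifford algebra\<close>

locale cherednik_clifford_model =
  fixes m1 m2 :: nat and \<kappa> :: "(nat \<Rightarrow> real) \<Rightarrow> complex" and c :: "complex \<Rightarrow> 'a::ring_1"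
    and x xi e :: "nat \<Rightarrow> 'a" and g :: "(nat \<Rightarrow> nat \<Rightarrow> real) \<Rightarrow> 'a"
  assumes model: "CH_model m1 m2 \<kappa> c x xi g e"
begin

lemma c_add:
  "c (a + b) = c a + c b"
proof -
  have "\<forall>a b. c (a + b) = c a + c b"
    using model unfolding CH_model_def by (elim conjE)
  then show ?thesis by blast
qed

lemma c_mult:
  "c (a * b) = c a * c b"
proof -
  have "\<forall>a b. c (a * b) = c a * c b"
    using model unfolding CH_model_def by (elim conjE)
  then show ?thesis by blast
qed

lemma c_one:
  "c 1 = 1"
proof -
  have "c 1 = 1"
    using model unfolding CH_model_def by (elim conjE)
  then show ?thesis by blast
qed

lemma c_central:
  "c a * y = y * c a"
proof -
  have "\<forall>a y. c a * y = y * c a"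
    using model unfolding CH_model_def by (elim conjE)
  then show ?thesis by blast
qed

lemma x_commute:
  assumes "j \<in> {1..4}" "k \<in> {1..4}"
  shows "x j * x k = x k * x j"
proof -
  have "\<forall>j\<in>{1..4}. \<forall>k\<in>{1..4}. x j * x k = x k * x j"
    using model unfolding CH_model_def by (elim conjE)
  then show ?thesis using assms by blast
qed

lemma xi_commute:
  assumes "j \<in> {1..4}" "k \<in> {1..4}"
  shows "xi j * xi k = xi k * xi j"
proof -
  have "\<forall>j\<in>{1..4}. \<forall>k\<in>{1..4}. xi j * xi k = xi k * xi j"
    using model unfolding CH_model_def by (elim conjE)
  then show ?thesis using assms by blast
qed

lemma dunkl_relation:
  assumes "j \<in> {1..4}" "k \<in> {1..4}"
  shows "xi j * x k - x k * xi j =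
    (if j = k then 1 else 0) +
    (\<Sum>a\<in>pos_roots m1 m2. c (2 * \<kappa> a / complex_of_real (inner4 a a)
          * complex_of_real (a j) * complex_of_real (a k)) * g (refl_mat a))"
proof -
  have "\<forall>j\<in>{1..4}. \<forall>k\<in>{1..4}. xi j * x k - x k * xi j =
    (if j = k then 1 else 0) +
    (\<Sum>a\<in>pos_roots m1 m2. c (2 * \<kappa> a / complex_of_real (inner4 a a)
          * complex_of_real (a j) * complex_of_real (a k)) * g (refl_mat a))"
    using model unfolding CH_model_def by (elim conjE)
  then show ?thesis using assms by blast
qed

lemma g_mult:
  assumes "w \<in> weyl m1 m2" "w' \<in> weyl m1 m2"
  shows "g (mat_mul w w') = g w * g w'"
proof -
  have "\<forall>w\<in>weyl m1 m2. \<forall>w'\<in>weyl m1 m2. g (mat_mul w w') = g w * g w'"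
    using model unfolding CH_model_def by (elim conjE)
  then show ?thesis using assms by blast
qed

lemma e_anticommutator:
  assumes "j \<in> {1..4}" "k \<in> {1..4}"
  shows "e j * e k + e k * e j = (if j = k then 2 else 0)"
proof -
  have "\<forall>j\<in>{1..4}. \<forall>k\<in>{1..4}. e j * e k + e k * e j = (if j = k then 2 else 0)"
    using model unfolding CH_model_def by (elim conjE)
  then show ?thesis using assms by blast
qed

lemma e_x_commute:
  assumes "j \<in> {1..4}" "k \<in> {1..4}"
  shows "e j * x k = x k * e j"
proof -
  have "\<forall>j\<in>{1..4}. \<forall>k\<in>{1..4}. e j * x k = x k * e j \<and> e j * xi k = xi k * e j"
    using model unfolding CH_model_def by (elim conjE)
  then show ?thesis using assms by blast
qed

lemma e_xi_commute:
  assumes "j \<in> {1..4}" "k \<in> {1..4}"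
  shows "e j * xi k = xi k * e j"
proof -
  have "\<forall>j\<in>{1..4}. \<forall>k\<in>{1..4}. e j * x k = x k * e j \<and> e j * xi k = xi k * e j"
    using model unfolding CH_model_def by (elim conjE)
  then show ?thesis using assms by blast
qed

lemma e_g_commute:
  assumes "j \<in> {1..4}" "w \<in> weyl m1 m2"
  shows "e j * g w = g w * e j"
proof -
  have "\<forall>j\<in>{1..4}. \<forall>w\<in>weyl m1 m2. e j * g w = g w * e j"
    using model unfolding CH_model_def by (elim conjE)
  then show ?thesis using assms by blast
qed

lemma c_zero: "c 0 = 0"
  using c_add[of 0 0] by simp

lemma c_minus: "c (- a) = - c a"
  using c_add[of a "- a"] by (simp add: c_zero eq_neg_iff_add_eq_0 add.commute)

lemma c_diff: "c (a - b) = c a - c b"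
  using c_add[of a "- b"] by (simp add: c_minus)

lemma c_of_nat: "c (of_nat n) = of_nat n"
  by (induction n) (simp_all add: c_zero c_add c_one)

lemma c_numeral: "c (numeral k) = numeral k"
  using c_of_nat[of "numeral k"] by simp

lemma c_of_int: "c (of_int k) = of_int k"
proof (cases k rule: int_cases)
  case (nonneg n)
  then show ?thesis using c_of_nat[of n] by simp
next
  case (neg n)
  then show ?thesis using c_of_nat[of "Suc n"] by (simp add: c_minus del: of_nat_Suc)
qed

lemma c_sum: "c (sum f S) = (\<Sum>j\<in>S. c (f j))"
  by (induction S rule: infinite_finite_induct) (simp_all add: c_zero c_add)

lemma c_left_commute: "y * (c a * z) = c a * (y * z)"
  by (metis c_central mult.assoc)

lemma c_half: "c (1/2) * (2 * z) = z"
proof -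
  have "c (1/2) * 2 = 1"
    using c_mult[of "1/2" 2] by (simp add: c_numeral c_one)
  then show ?thesis by (simp add: mult.assoc[symmetric])
qed

lemma e_square: "j \<in> {1..4} \<Longrightarrow> e j * e j = 1"
  using e_anticommutator[of j j] c_half[of "e j * e j"] c_half[of 1] by (simp add: mult_2)

lemma e_anticommute: "j \<in> {1..4} \<Longrightarrow> k \<in> {1..4} \<Longrightarrow> j \<noteq> k \<Longrightarrow> e j * e k = - (e k * e j)"
  using e_anticommutator[of j k] by (simp add: eq_neg_iff_add_eq_0)

lemma signed_commute_c_right: "signed_commute False y (c a)"
  and signed_commute_c_left: "signed_commute False (c a) y"
  by (simp_all add: signed_commute_False c_central)

lemma signed_commute_e_e:
  "j \<in> {1..4} \<Longrightarrow> k \<in> {1..4} \<Longrightarrow> j \<noteq> k \<Longrightarrow> signed_commute True (e j) (e k)"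
  by (simp add: signed_commute_True e_anticommute[of j k])

lemma signed_commute_x_x: "j \<in> {1..4} \<Longrightarrow> k \<in> {1..4} \<Longrightarrow> signed_commute False (x j) (x k)"
  and signed_commute_xi_xi: "j \<in> {1..4} \<Longrightarrow> k \<in> {1..4} \<Longrightarrow> signed_commute False (xi j) (xi k)"
  and signed_commute_e_x: "j \<in> {1..4} \<Longrightarrow> k \<in> {1..4} \<Longrightarrow> signed_commute False (e j) (x k)"
  and signed_commute_e_xi: "j \<in> {1..4} \<Longrightarrow> k \<in> {1..4} \<Longrightarrow> signed_commute False (e j) (xi k)"
  by (simp_all add: signed_commute_False x_commute xi_commute e_x_commute e_xi_commute)

subsection \<open>Reflections and the Dunkl relations\<close>

definition root_pairing :: "(nat \<Rightarrow> real) \<Rightarrow> (nat \<Rightarrow> 'a) \<Rightarrow> 'a" where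
  "root_pairing a y = (\<Sum>k\<in>{1..4}. c (complex_of_real (a k)) * y k)"

definition vector_family :: "(nat \<Rightarrow> 'a) \<Rightarrow> bool" where
  "vector_family y \<longleftrightarrow>
     (\<forall>w\<in>weyl m1 m2. \<forall>j\<in>{1..4}. g w * y j = (\<Sum>k\<in>{1..4}. c (complex_of_real (w k j)) * y k) * g w) \<and>
     (\<forall>j\<in>{1..4}. \<forall>k\<in>{1..4}. e j * y k = y k * e j)"

lemma vector_family_x: "vector_family x"
proof -
  have "\<forall>w\<in>weyl m1 m2. \<forall>j\<in>{1..4}. g w * x j = (\<Sum>k\<in>{1..4}. c (complex_of_real (w k j)) * x k) * g w"
    using model unfolding CH_model_def by (elim conjE)
  then show ?thesis
    unfolding vector_family_def by (simp add: e_x_commute)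
qed

lemma vector_family_xi: "vector_family xi"
proof -
  have "\<forall>w\<in>weyl m1 m2. \<forall>j\<in>{1..4}. g w * xi j = (\<Sum>k\<in>{1..4}. c (complex_of_real (w k j)) * xi k) * g w"
    using model unfolding CH_model_def by (elim conjE)
  then show ?thesis
    unfolding vector_family_def by (simp add: e_xi_commute)
qed

lemma reflection_conj:
  assumes y: "vector_family y" and a: "a \<in> roots m1 m2" and j: "j \<in> {1..4}"
  shows "g (refl_mat a) * y j = (y j - 2 * (c (complex_of_real (a j)) * root_pairing a y)) * g (refl_mat a)"
proof -
  have entry: "c (complex_of_real (refl_mat a k j)) * y k =
      (if k = j then y k else 0) - 2 * (c (complex_of_real (a j)) * (c (complex_of_real (a k)) * y k))"
    if k: "k \<in> {1..4}" for k
  proof -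
    have refl_entry: "refl_mat a k j = (if k = j then 1 else 0) - 2 * (a j * a k)"
      using refl_mat_unit[OF roots_unit[OF a]] k j by (simp add: mult_ac)
    show ?thesis
      unfolding refl_entry
      by (cases "k = j") (simp_all add: c_diff c_minus c_mult c_numeral c_one c_zero algebra_simps)
  qed
  have "g (refl_mat a) * y j = (\<Sum>k\<in>{1..4}. c (complex_of_real (refl_mat a k j)) * y k) * g (refl_mat a)"
    using y refl_mat_in_weyl[OF a] j unfolding vector_family_def by blast
  also have "(\<Sum>k\<in>{1..4}. c (complex_of_real (refl_mat a k j)) * y k)
      = (\<Sum>k\<in>{1..4}. (if k = j then y k else 0) - 2 * (c (complex_of_real (a j)) * (c (complex_of_real (a k)) * y k)))"
    by (rule sum.cong[OF refl entry])
  also have "\<dots> = y j - 2 * (c (complex_of_real (a j)) * root_pairing a y)"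
    using j by (simp add: sum_subtractf sum_distrib_left root_pairing_def)
  finally show ?thesis .
qed

lemma reflection_anticommutes_root_pairing:
  assumes y: "vector_family y" and a: "a \<in> roots m1 m2"
  shows "g (refl_mat a) * root_pairing a y = - (root_pairing a y * g (refl_mat a))"
proof -
  define G where "G = g (refl_mat a)"
  define ay where "ay = root_pairing a y"
  define ca where "ca k = c (complex_of_real (a k))" for k
  have "(\<Sum>k\<in>{1..4}. ca k * ca k) = c (complex_of_real (inner4 a a))"
    by (simp add: ca_def inner4_def c_sum c_mult)
  then have norm: "(\<Sum>k\<in>{1..4}. ca k * ca k) = 1"
    using roots_unit[OF a] by (simp add: c_one)
  have conj: "G * y k = (y k - 2 * (ca k * ay)) * G" if "k \<in> {1..4}" for k
    using reflection_conj[OF y a that] by (simp add: G_def ay_def ca_def)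
  have "G * ay = (\<Sum>k\<in>{1..4}. ca k * (G * y k))"
    by (simp add: ay_def root_pairing_def ca_def sum_distrib_left c_left_commute[of G])
  also have "\<dots> = (\<Sum>k\<in>{1..4}. ca k * y k * G - 2 * (ca k * ca k * (ay * G)))"
    by (intro sum.cong refl) (simp add: conj algebra_simps numeral_left_commute)
  also have "\<dots> = ay * G - 2 * (ay * G)"
  proof -
    have "(\<Sum>k\<in>{1..4}. ca k * y k * G) = ay * G"
      by (simp add: ay_def root_pairing_def ca_def sum_distrib_right)
    moreover have "(\<Sum>k\<in>{1..4}. 2 * (ca k * ca k * (ay * G))) = 2 * ((\<Sum>k\<in>{1..4}. ca k * ca k) * (ay * G))"
      by (simp add: sum_distrib_left sum_distrib_right)
    ultimately show ?thesis
      by (simp only: sum_subtractf norm mult_1_left)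
  qed
  also have "\<dots> = - (ay * G)"
    by (simp add: mult_2)
  finally show ?thesis unfolding G_def ay_def .
qed

lemma reflection_block_cancel:
  assumes y: "vector_family y" and a: "a \<in> pos_roots m1 m2" and pq: "block_pair p q"
  shows "c (complex_of_real (a p)) * (g (refl_mat a) * y p + y p * g (refl_mat a))
       + c (complex_of_real (a q)) * (g (refl_mat a) * y q + y q * g (refl_mat a)) = 0"
proof -
  have a': "a \<in> roots m1 m2" using a pos_roots_subset_roots by blast
  consider (inside) "\<forall>j\<in>{1..4}. j \<noteq> p \<longrightarrow> j \<noteq> q \<longrightarrow> a j = 0" | (outside) "a p = 0" "a q = 0"
    using root_block_support[OF a' pq] by blast
  then show ?thesis
  proof cases
    case inside
    define G where "G = g (refl_mat a)"
    define ay where "ay = c (complex_of_real (a p)) * y p + c (complex_of_real (a q)) * y q"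
    have "root_pairing a y = ay"
      using pq inside unfolding ay_def root_pairing_def block_pair_def sum_1_to_4 by (auto simp: c_zero)
    then have "G * ay + ay * G = 0"
      using reflection_anticommutes_root_pairing[OF y a'] by (simp add: G_def)
    moreover have "G * ay + ay * G = c (complex_of_real (a p)) * (G * y p + y p * G)
       + c (complex_of_real (a q)) * (G * y q + y q * G)"
      by (simp add: ay_def algebra_simps c_left_commute[of G])
    ultimately show ?thesis
      by (simp add: G_def)
  next
    case outside
    then show ?thesis by (simp add: c_zero)
  qed
qed

definition dunkl_coeff :: "nat \<Rightarrow> (nat \<Rightarrow> real) \<Rightarrow> 'a" where
  "dunkl_coeff j a = c (2 * \<kappa> a / complex_of_real (inner4 a a) * complex_of_real (a j))"

lemma xi_x_commutator:
  assumes "j \<in> {1..4}" "k \<in> {1..4}"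
  shows "xi j * x k - x k * xi j = (if j = k then 1 else 0)
      + (\<Sum>a\<in>pos_roots m1 m2. dunkl_coeff j a * (c (complex_of_real (a k)) * g (refl_mat a)))"
    and "xi k * x j - x j * xi k = (if j = k then 1 else 0)
      + (\<Sum>a\<in>pos_roots m1 m2. dunkl_coeff j a * (c (complex_of_real (a k)) * g (refl_mat a)))"
proof -
  have coeff: "c (2 * \<kappa> a / complex_of_real (inner4 a a) * complex_of_real (a j) * complex_of_real (a k))
      * g (refl_mat a) = dunkl_coeff j a * (c (complex_of_real (a k)) * g (refl_mat a))" for a
    by (simp only: dunkl_coeff_def c_mult mult.assoc)
  have swap: "2 * \<kappa> a / complex_of_real (inner4 a a) * complex_of_real (a k) * complex_of_real (a j)
      = 2 * \<kappa> a / complex_of_real (inner4 a a) * complex_of_real (a j) * complex_of_real (a k)" for a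
    by (simp only: mult_ac)
  show "xi j * x k - x k * xi j = (if j = k then 1 else 0)
      + (\<Sum>a\<in>pos_roots m1 m2. dunkl_coeff j a * (c (complex_of_real (a k)) * g (refl_mat a)))"
    using dunkl_relation[OF assms] by (simp only: coeff)
  show "xi k * x j - x j * xi k = (if j = k then 1 else 0)
      + (\<Sum>a\<in>pos_roots m1 m2. dunkl_coeff j a * (c (complex_of_real (a k)) * g (refl_mat a)))"
    using dunkl_relation[OF assms(2,1)] by (simp only: swap coeff eq_commute[of k j])
qed

lemma dunkl_block_sum:
  assumes y: "vector_family y" and pq: "block_pair p q" and j: "j = p \<or> j = q"
    and T: "\<And>k. k \<in> {1..4} \<Longrightarrow> T k = (if j = k then 1 else 0)
      + (\<Sum>a\<in>pos_roots m1 m2. dunkl_coeff j a * (c (complex_of_real (a k)) * g (refl_mat a)))"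
  shows "(T p * y p + y p * T p) + (T q * y q + y q * T q) = 2 * y j"
proof -
  have idx: "p \<in> {1..4}" "q \<in> {1..4}" "p \<noteq> q"
    using block_pair_indices[OF pq] by auto
  define W where "W k = (\<Sum>a\<in>pos_roots m1 m2. dunkl_coeff j a * (c (complex_of_real (a k))
      * (g (refl_mat a) * y k + y k * g (refl_mat a))))" for k
  have split: "T k * y k + y k * T k = 2 * ((if j = k then 1 else 0) * y k) + W k"
    if "k \<in> {1..4}" for k
  proof -
    define S where "S = (\<Sum>a\<in>pos_roots m1 m2. dunkl_coeff j a * (c (complex_of_real (a k)) * g (refl_mat a)))"
    have "S * y k = (\<Sum>a\<in>pos_roots m1 m2. dunkl_coeff j a * (c (complex_of_real (a k)) * (g (refl_mat a) * y k)))"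
      by (simp add: S_def sum_distrib_right mult.assoc)
    moreover have "y k * S = (\<Sum>a\<in>pos_roots m1 m2. dunkl_coeff j a * (c (complex_of_real (a k)) * (y k * g (refl_mat a))))"
      by (simp add: S_def sum_distrib_left dunkl_coeff_def c_left_commute[of "y k"])
    ultimately have "S * y k + y k * S = W k"
      by (simp add: W_def sum.distrib[symmetric] distrib_left)
    moreover have "(if j = k then 1 else 0) * y k + y k * (if j = k then 1 else 0) = 2 * ((if j = k then 1 else 0) * y k)"
      by (simp add: mult_2)
    ultimately show ?thesis
      unfolding T[OF that] S_def[symmetric] by (simp add: algebra_simps)
  qed
  have "W p + W q = (\<Sum>a\<in>pos_roots m1 m2. dunkl_coeff j a *
      (c (complex_of_real (a p)) * (g (refl_mat a) * y p + y p * g (refl_mat a))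
       + c (complex_of_real (a q)) * (g (refl_mat a) * y q + y q * g (refl_mat a))))"
    unfolding W_def by (simp add: sum.distrib[symmetric] distrib_left)
  also have "\<dots> = 0"
    using reflection_block_cancel[OF y _ pq] by (simp add: sum.neutral)
  finally have "W p + W q = 0" .
  then show ?thesis
    using j idx split[of p] split[of q] by auto
qed

lemma dunkl_x_square:
  assumes pq: "block_pair p q" and j: "j = p \<or> j = q"
  shows "xi j * (x p * x p + x q * x q) - (x p * x p + x q * x q) * xi j = 2 * x j"
proof -
  have "j \<in> {1..4}" using j block_pair_indices[OF pq] by auto
  have "xi j * (x p * x p + x q * x q) - (x p * x p + x q * x q) * xi j
      = ((xi j * x p - x p * xi j) * x p + x p * (xi j * x p - x p * xi j))
        + ((xi j * x q - x q * xi j) * x q + x q * (xi j * x q - x q * xi j))"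
    by (simp add: algebra_simps)
  also have "\<dots> = 2 * x j"
    by (rule dunkl_block_sum[OF vector_family_x pq j, where T = "\<lambda>k. xi j * x k - x k * xi j"])
      (rule xi_x_commutator(1)[OF \<open>j \<in> {1..4}\<close>])
  finally show ?thesis .
qed

lemma dunkl_xi_square:
  assumes pq: "block_pair p q" and j: "j = p \<or> j = q"
  shows "(xi p * xi p + xi q * xi q) * x j - x j * (xi p * xi p + xi q * xi q) = 2 * xi j"
proof -
  have "j \<in> {1..4}" using j block_pair_indices[OF pq] by auto
  have "(xi p * xi p + xi q * xi q) * x j - x j * (xi p * xi p + xi q * xi q)
      = ((xi p * x j - x j * xi p) * xi p + xi p * (xi p * x j - x j * xi p))
        + ((xi q * x j - x j * xi q) * xi q + xi q * (xi q * x j - x j * xi q))"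
    by (simp add: algebra_simps)
  also have "\<dots> = 2 * xi j"
    by (rule dunkl_block_sum[OF vector_family_xi pq j, where T = "\<lambda>k. xi k * x j - x j * xi k"])
      (rule xi_x_commutator(2)[OF \<open>j \<in> {1..4}\<close>])
  finally show ?thesis .
qed

lemma signed_commute_xi_x_cross:
  assumes "j \<in> {1..4}" "k \<in> {1..4}" "(j \<le> 2) \<noteq> (k \<le> 2)"
  shows "signed_commute False (xi j) (x k)"
proof -
  have "(\<Sum>a\<in>pos_roots m1 m2. dunkl_coeff j a * (c (complex_of_real (a k)) * g (refl_mat a))) = 0"
  proof (intro sum.neutral ballI)
    fix a assume "a \<in> pos_roots m1 m2"
    then have "a j = 0 \<or> a k = 0"
      using roots_block_cases[OF subsetD[OF pos_roots_subset_roots]] assms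
      unfolding atLeastAtMost_1_4 by auto
    then show "dunkl_coeff j a * (c (complex_of_real (a k)) * g (refl_mat a)) = 0"
      by (auto simp: dunkl_coeff_def c_zero)
  qed
  moreover have "j \<noteq> k" using assms(3) by auto
  ultimately show ?thesis
    using xi_x_commutator(1)[OF assms(1,2)] by (simp add: signed_commute_False)
qed

lemmas signed_commute_rules =
  signed_commute_intros signed_commute_c_right signed_commute_c_left signed_commute_e_e
  signed_commute_x_x signed_commute_xi_xi
  signed_commute_e_x signed_commute_e_x[THEN signed_commute_sym]
  signed_commute_e_xi signed_commute_e_xi[THEN signed_commute_sym]
  signed_commute_xi_x_cross signed_commute_xi_x_cross[THEN signed_commute_sym]

definition xu_blk :: "nat \<Rightarrow> nat \<Rightarrow> 'a" where
  "xu_blk p q = x p * e p + x q * e q"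

definition Du_blk :: "nat \<Rightarrow> nat \<Rightarrow> 'a" where
  "Du_blk p q = xi p * e p + xi q * e q"

definition e_pair :: "nat \<Rightarrow> nat \<Rightarrow> 'a" where
  "e_pair p q = e p * e q"

definition Dx_comm :: "nat \<Rightarrow> nat \<Rightarrow> 'a" where
  "Dx_comm p q = Du_blk p q * xu_blk p q - xu_blk p q * Du_blk p q"

definition P_pair :: "nat \<Rightarrow> nat \<Rightarrow> 'a" where
  "P_pair p q = (1 - Dx_comm p q) * e_pair p q"

definition e_vol :: 'a where
  "e_vol = e 1 * e 2 * e 3 * e 4"

text \<open>
  Since the rules decompose the right argument first, e_vol must stay folded in goals whose left
  argument contains block components such as x_3 e_3 + x_4 e_4: these have a sign against e_vol but
  none against e_3 alone.
\<close>

lemma signed_commute_e_vol: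
  "j \<in> {1..4} \<Longrightarrow> signed_commute False (x j) e_vol"
  "j \<in> {1..4} \<Longrightarrow> signed_commute False (xi j) e_vol"
  "j \<in> {1..4} \<Longrightarrow> signed_commute True (e j) e_vol"
  unfolding atLeastAtMost_1_4 e_vol_def
  by (elim insertE emptyE; simp only:; (rule signed_commute_rules | simp)+)+

definition P_vol :: 'a where
  "P_vol = (1 - (Du xi e * xu x e - xu x e * Du xi e)) * e_vol"

lemma xu_split: "blocks p q r s \<Longrightarrow> xu x e = xu_blk p q + xu_blk r s"
  and Du_split: "blocks p q r s \<Longrightarrow> Du xi e = Du_blk p q + Du_blk r s"
  unfolding blocks_def xu_def Du_def xu_blk_def Du_blk_def sum_1_to_4 by (auto simp: algebra_simps)

lemma clifford_block_square:
  assumes y: "vector_family y" and pq: "p \<in> {1..4}" "q \<in> {1..4}" "p \<noteq> q"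
    and yy: "y p * y q = y q * y p"
  shows "(y p * e p + y q * e q) * (y p * e p + y q * e q) = y p * y p + y q * y q"
proof -
  have swap: "(y i * e i) * (y k * e k) = (y i * y k) * (e i * e k)" if "i \<in> {1..4}" "k \<in> {1..4}" for i k
  proof -
    have "e i * y k = y k * e i" using y that unfolding vector_family_def by blast
    then show ?thesis by (metis mult.assoc)
  qed
  show ?thesis
    using pq by (simp add: distrib_left distrib_right swap e_square e_anticommute[of q p] yy)
qed

lemma xu_blk_square: "block_pair p q \<Longrightarrow> xu_blk p q * xu_blk p q = x p * x p + x q * x q"
  unfolding xu_blk_def
  by (rule clifford_block_square[OF vector_family_x]) (auto simp: block_pair_def x_commute)

lemma Du_blk_square: "block_pair p q \<Longrightarrow> Du_blk p q * Du_blk p q = xi p * xi p + xi q * xi q"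
  unfolding Du_blk_def
  by (rule clifford_block_square[OF vector_family_xi]) (auto simp: block_pair_def xi_commute)

lemma Dx_comm_anticommute_xu_blk:
  assumes pq: "block_pair p q"
  shows "Dx_comm p q * xu_blk p q + xu_blk p q * Dx_comm p q = 2 * xu_blk p q"
proof -
  have idx: "p \<in> {1..4}" "q \<in> {1..4}" using block_pair_indices[OF pq] by auto
  define R where "R = x p * x p + x q * x q"
  have eR: "e k * R = R * e k" if "k \<in> {1..4}" for k
  proof -
    have "signed_commute False (e k) R"
      unfolding R_def by (rule signed_commute_rules idx that | simp)+
    then show ?thesis by (simp add: signed_commute_False)
  qed
  have xiR: "xi p * R - R * xi p = 2 * x p" "xi q * R - R * xi q = 2 * x q"
    using dunkl_x_square[OF pq] unfolding R_def by auto
  have "Dx_comm p q * xu_blk p q + xu_blk p q * Dx_comm p q = Du_blk p q * R - R * Du_blk p q"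
    unfolding Dx_comm_def anticommutator_of_commutator(1) xu_blk_square[OF pq] R_def ..
  also have "\<dots> = (xi p * R - R * xi p) * e p + (xi q * R - R * xi q) * e q"
    using idx by (simp add: Du_blk_def algebra_simps eR)
  also have "\<dots> = 2 * xu_blk p q"
    unfolding xiR xu_blk_def by (simp add: algebra_simps)
  finally show ?thesis .
qed

lemma Dx_comm_anticommute_Du_blk:
  assumes pq: "block_pair p q"
  shows "Dx_comm p q * Du_blk p q + Du_blk p q * Dx_comm p q = 2 * Du_blk p q"
proof -
  have idx: "p \<in> {1..4}" "q \<in> {1..4}" using block_pair_indices[OF pq] by auto
  define L where "L = xi p * xi p + xi q * xi q"
  have eL: "e k * L = L * e k" if "k \<in> {1..4}" for k
  proof -
    have "signed_commute False (e k) L"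
      unfolding L_def by (rule signed_commute_rules idx that | simp)+
    then show ?thesis by (simp add: signed_commute_False)
  qed
  have Lx: "L * x p - x p * L = 2 * xi p" "L * x q - x q * L = 2 * xi q"
    using dunkl_xi_square[OF pq] unfolding L_def by auto
  have "Dx_comm p q * Du_blk p q + Du_blk p q * Dx_comm p q = L * xu_blk p q - xu_blk p q * L"
    unfolding Dx_comm_def anticommutator_of_commutator(2) Du_blk_square[OF pq] L_def ..
  also have "\<dots> = (L * x p - x p * L) * e p + (L * x q - x q * L) * e q"
    using idx by (simp add: xu_blk_def algebra_simps eL)
  also have "\<dots> = 2 * Du_blk p q"
    unfolding Lx Du_blk_def by (simp add: algebra_simps)
  finally show ?thesis .
qed

lemma P_pair_commute_own_block:
  assumes pq: "block_pair p q"
  shows "signed_commute False (P_pair p q) (xu_blk p q)"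
    and "signed_commute False (P_pair p q) (Du_blk p q)"
proof -
  have idx: "p \<in> {1..4}" "q \<in> {1..4}" "p \<noteq> q" using block_pair_indices[OF pq] by auto
  have N: "signed_commute True (e_pair p q) (xu_blk p q)" "signed_commute True (e_pair p q) (Du_blk p q)"
    unfolding e_pair_def xu_blk_def Du_blk_def
    by (rule signed_commute_rules idx | simp add: idx(3) not_sym[OF idx(3)])+
  show "signed_commute False (P_pair p q) (xu_blk p q)"
    using commute_one_minus_mult[OF N(1)[unfolded signed_commute_True] Dx_comm_anticommute_xu_blk[OF pq]]
    by (simp add: P_pair_def signed_commute_False)
  show "signed_commute False (P_pair p q) (Du_blk p q)"
    using commute_one_minus_mult[OF N(2)[unfolded signed_commute_True] Dx_comm_anticommute_Du_blk[OF pq]]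
    by (simp add: P_pair_def signed_commute_False)
qed

lemma P_pair_commute_other_block:
  assumes "blocks p q r s"
  shows "signed_commute False (P_pair p q) (xu_blk r s)"
    and "signed_commute False (P_pair p q) (Du_blk r s)"
    and "signed_commute False (P_pair p q) (e_pair r s)"
    and "signed_commute False (P_pair p q) e_vol"
  by (insert assms[unfolded blocks_def], (elim disjE conjE; hypsubst_thin;
      unfold P_pair_def Dx_comm_def xu_blk_def Du_blk_def e_pair_def;
      (rule signed_commute_rules signed_commute_e_vol | simp)+)+)

lemma P_pair_commute_P_pair:
  assumes "blocks p q r s"
  shows "signed_commute False (P_pair p q) (P_pair r s)"
  unfolding P_pair_def[of r s] Dx_comm_def[of r s]
  by (rule signed_commute_rules P_pair_commute_other_block[OF assms])+

lemma P_pair_commute_P_vol: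
  assumes "blocks p q r s"
  shows "signed_commute False (P_pair p q) P_vol"
  unfolding P_vol_def xu_split[OF assms] Du_split[OF assms]
  by (rule signed_commute_rules P_pair_commute_other_block[OF assms]
      P_pair_commute_own_block[OF conjunct1[OF blocks_block_pair[OF assms]]])+

lemma stilde_eq: "stilde c g e a = g (refl_mat a) * root_pairing a e"
  unfolding stilde_def gvec_def root_pairing_def ..

lemma root_pairing_block:
  assumes "blocks p q r s" "a r = 0" "a s = 0"
  shows "root_pairing a y = c (complex_of_real (a p)) * y p + c (complex_of_real (a q)) * y q"
  using assms unfolding blocks_def root_pairing_def sum_1_to_4 by (auto simp: c_zero)

lemma root_pairing_anticommute_e:
  assumes "j \<in> {1..4}"
  shows "root_pairing a e * e j + e j * root_pairing a e = 2 * c (complex_of_real (a j))"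
proof -
  have "root_pairing a e * e j + e j * root_pairing a e
      = (\<Sum>k\<in>{1..4}. c (complex_of_real (a k)) * (e k * e j + e j * e k))"
    by (simp add: root_pairing_def sum_distrib_left sum_distrib_right sum.distrib distrib_left
        mult.assoc c_left_commute[of "e j"])
  also have "\<dots> = (\<Sum>k\<in>{1..4}. if k = j then 2 * c (complex_of_real (a k)) else 0)"
    using assms by (intro sum.cong refl) (simp add: e_anticommutator c_central[of _ 2])
  also have "\<dots> = 2 * c (complex_of_real (a j))"
    using assms by simp
  finally show ?thesis .
qed

lemma clifford_anticommutator:
  "root_pairing a e * root_pairing b e + root_pairing b e * root_pairing a e
    = 2 * c (complex_of_real (inner4 a b))"
proof -
  have "root_pairing a e * root_pairing b e + root_pairing b e * root_pairing a e
      = (\<Sum>k\<in>{1..4}. c (complex_of_real (a k)) * (e k * root_pairing b e + root_pairing b e * e k))"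
    unfolding root_pairing_def[of a]
    by (simp add: sum_distrib_left sum_distrib_right sum.distrib distrib_left
        mult.assoc c_left_commute[of "root_pairing b e"])
  also have "\<dots> = (\<Sum>k\<in>{1..4}. 2 * c (complex_of_real (a k * b k)))"
    by (intro sum.cong refl)
      (simp add: root_pairing_anticommute_e[of _ b, simplified add.commute] c_mult numeral_left_commute)
  also have "\<dots> = 2 * c (complex_of_real (inner4 a b))"
    unfolding inner4_def by (simp add: sum_distrib_left c_sum)
  finally show ?thesis .
qed

lemma root_pairing_e_square: "a \<in> roots m1 m2 \<Longrightarrow> root_pairing a e * root_pairing a e = 1"
  using clifford_anticommutator[of a a] roots_unit[of a] c_half[of "root_pairing a e * root_pairing a e"] c_half[of 1]
  by (simp add: mult_2 c_one)

lemma root_pairing_e_commute_vector: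
  assumes "vector_family y" "k \<in> {1..4}"
  shows "root_pairing a e * y k = y k * root_pairing a e"
proof -
  have "e j * y k = y k * e j" if "j \<in> {1..4}" for j
    using assms that unfolding vector_family_def by blast
  then show ?thesis
    by (simp add: root_pairing_def sum_distrib_left sum_distrib_right mult.assoc c_left_commute[of "y k"])
qed

lemma root_pairing_e_commute_g:
  assumes "w \<in> weyl m1 m2"
  shows "root_pairing a e * g w = g w * root_pairing a e"
  using assms e_g_commute
  by (simp add: root_pairing_def sum_distrib_left sum_distrib_right mult.assoc c_left_commute[of "g w"])

lemma root_pairing_anticommute_vector:
  assumes y: "vector_family y"
  shows "root_pairing a e * (\<Sum>j\<in>{1..4}. y j * e j)
    = 2 * root_pairing a y - (\<Sum>j\<in>{1..4}. y j * e j) * root_pairing a e"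
proof -
  let ?\<gamma> = "root_pairing a e"
  have "?\<gamma> * (y j * e j) = 2 * (c (complex_of_real (a j)) * y j) - y j * e j * ?\<gamma>"
    if j: "j \<in> {1..4}" for j
  proof -
    have "?\<gamma> * (y j * e j) = y j * (?\<gamma> * e j)"
      using root_pairing_e_commute_vector[OF y j] by (simp add: mult.assoc[symmetric])
    also have "?\<gamma> * e j = 2 * c (complex_of_real (a j)) - e j * ?\<gamma>"
      using root_pairing_anticommute_e[OF j] by (simp add: eq_diff_eq)
    finally show ?thesis
      by (simp add: right_diff_distrib numeral_left_commute c_central[of _ "y j", symmetric] mult.assoc)
  qed
  then have "?\<gamma> * (\<Sum>j\<in>{1..4}. y j * e j)
      = (\<Sum>j\<in>{1..4}. 2 * (c (complex_of_real (a j)) * y j) - y j * e j * ?\<gamma>)"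
    by (simp add: sum_distrib_left)
  also have "\<dots> = 2 * root_pairing a y - (\<Sum>j\<in>{1..4}. y j * e j) * ?\<gamma>"
    by (simp add: sum_subtractf sum_distrib_left sum_distrib_right root_pairing_def[of a y])
  finally show ?thesis .
qed

lemma reflection_conj_vector:
  assumes y: "vector_family y" and a: "a \<in> roots m1 m2"
  shows "g (refl_mat a) * (\<Sum>j\<in>{1..4}. y j * e j)
    = ((\<Sum>j\<in>{1..4}. y j * e j) - 2 * (root_pairing a y * root_pairing a e)) * g (refl_mat a)"
proof -
  let ?G = "g (refl_mat a)"
  have "?G * (y j * e j) = (y j * e j - 2 * (root_pairing a y * (c (complex_of_real (a j)) * e j))) * ?G"
    if j: "j \<in> {1..4}" for j
  proof -
    have "?G * (y j * e j) = (?G * y j) * e j"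
      by (simp add: mult.assoc)
    also have "\<dots> = (y j - 2 * (c (complex_of_real (a j)) * root_pairing a y)) * (?G * e j)"
      by (simp add: reflection_conj[OF y a j] mult.assoc)
    also have "?G * e j = e j * ?G"
      using e_g_commute[OF j refl_mat_in_weyl[OF a]] by simp
    finally show ?thesis
      by (simp add: left_diff_distrib mult.assoc c_left_commute[of "root_pairing a y"])
  qed
  then have "?G * (\<Sum>j\<in>{1..4}. y j * e j)
      = (\<Sum>j\<in>{1..4}. (y j * e j - 2 * (root_pairing a y * (c (complex_of_real (a j)) * e j))) * ?G)"
    by (simp add: sum_distrib_left)
  also have "\<dots> = ((\<Sum>j\<in>{1..4}. y j * e j) - 2 * (root_pairing a y * root_pairing a e)) * ?G"
    by (simp add: sum_subtractf sum_distrib_left sum_distrib_right root_pairing_def[of a e] left_diff_distrib)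
  finally show ?thesis .
qed

lemma stilde_anticommute_vector:
  assumes y: "vector_family y" and a: "a \<in> roots m1 m2"
  shows "signed_commute True (stilde c g e a) (\<Sum>j\<in>{1..4}. y j * e j)"
proof -
  define G where "G = g (refl_mat a)"
  define \<gamma> where "\<gamma> = root_pairing a e"
  define Y where "Y = (\<Sum>j\<in>{1..4}. y j * e j)"
  define ay where "ay = root_pairing a y"
  have \<gamma>Y: "\<gamma> * Y = 2 * ay - Y * \<gamma>"
    unfolding \<gamma>_def Y_def ay_def by (rule root_pairing_anticommute_vector[OF y])
  have GY: "G * Y = (Y - 2 * (ay * \<gamma>)) * G"
    unfolding G_def Y_def ay_def \<gamma>_def by (rule reflection_conj_vector[OF y a])
  have Gay: "G * ay = - (ay * G)"
    unfolding G_def ay_def by (rule reflection_anticommutes_root_pairing[OF y a])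
  have \<gamma>G\<gamma>: "\<gamma> * G * \<gamma> = G"
    using root_pairing_e_commute_g[OF refl_mat_in_weyl[OF a]] root_pairing_e_square[OF a]
    by (simp add: G_def \<gamma>_def mult.assoc)
  have "G * \<gamma> * Y = 2 * (G * ay) - (G * Y) * \<gamma>"
    by (simp add: mult.assoc \<gamma>Y right_diff_distrib numeral_left_commute)
  also have "\<dots> = - (Y * (G * \<gamma>)) + 2 * (ay * (\<gamma> * G * \<gamma>)) - 2 * (ay * G)"
    by (simp add: Gay GY algebra_simps)
  also have "\<dots> = - (Y * (G * \<gamma>))"
    by (simp add: \<gamma>G\<gamma>)
  finally show ?thesis
    by (simp add: signed_commute_True stilde_eq G_def \<gamma>_def Y_def)
qed

lemma stilde_anticommute_coordinate:
  assumes y: "vector_family y" and a: "a \<in> roots m1 m2" and r: "r \<in> {1..4}" "a r = 0"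
  shows "signed_commute True (stilde c g e a) (y r * e r)"
proof -
  have Gy: "signed_commute False (g (refl_mat a)) (y r)"
    using reflection_conj[OF y a r(1)] r(2) by (simp add: signed_commute_False c_zero)
  have Ge: "signed_commute False (g (refl_mat a)) (e r)"
    using e_g_commute[OF r(1) refl_mat_in_weyl[OF a]] by (simp add: signed_commute_False)
  have \<gamma>y: "signed_commute False (root_pairing a e) (y r)"
    using root_pairing_e_commute_vector[OF y r(1)] by (simp add: signed_commute_False)
  have \<gamma>e: "signed_commute True (root_pairing a e) (e r)"
    using root_pairing_anticommute_e[OF r(1), of a] r(2)
    by (simp add: signed_commute_True c_zero eq_neg_iff_add_eq_0)
  show ?thesis
    unfolding stilde_eq by (rule signed_commute_rules Gy Ge \<gamma>y \<gamma>e)+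
qed

lemma stilde_anticommute_blocks:
  assumes a: "a \<in> roots m1 m2" and pqrs: "blocks p q r s" and ar: "a r = 0" "a s = 0"
  shows "signed_commute True (stilde c g e a) (xu_blk p q)"
    and "signed_commute True (stilde c g e a) (xu_blk r s)"
    and "signed_commute True (stilde c g e a) (Du_blk p q)"
    and "signed_commute True (stilde c g e a) (Du_blk r s)"
proof -
  have rs: "r \<in> {1..4}" "s \<in> {1..4}"
    using pqrs unfolding blocks_def by auto
  note coord = stilde_anticommute_coordinate[OF _ a]
  show xrs: "signed_commute True (stilde c g e a) (xu_blk r s)"
    unfolding xu_blk_def
    by (rule signed_commute_rules coord[OF vector_family_x rs(1) ar(1)] coord[OF vector_family_x rs(2) ar(2)])+
  show Drs: "signed_commute True (stilde c g e a) (Du_blk r s)"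
    unfolding Du_blk_def
    by (rule signed_commute_rules coord[OF vector_family_xi rs(1) ar(1)] coord[OF vector_family_xi rs(2) ar(2)])+
  have pq: "xu_blk p q = xu x e - xu_blk r s" "Du_blk p q = Du xi e - Du_blk r s"
    by (simp_all add: xu_split[OF pqrs] Du_split[OF pqrs])
  have "signed_commute True (stilde c g e a) (xu x e)" "signed_commute True (stilde c g e a) (Du xi e)"
    unfolding xu_def Du_def
    by (rule stilde_anticommute_vector[OF vector_family_x a] stilde_anticommute_vector[OF vector_family_xi a])+
  then show "signed_commute True (stilde c g e a) (xu_blk p q)"
    and "signed_commute True (stilde c g e a) (Du_blk p q)"
    unfolding pq using xrs Drs by (auto intro: signed_commute_diff_right)
qed

lemma signed_commute_g_e_vol: "w \<in> weyl m1 m2 \<Longrightarrow> signed_commute False (g w) e_vol"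
  unfolding e_vol_def
  by (rule signed_commute_rules e_g_commute[THEN sym, unfolded signed_commute_False[symmetric]] | simp)+

lemma stilde_signs_clifford:
  assumes a: "a \<in> roots m1 m2" and pqrs: "blocks p q r s" and ar: "a r = 0" "a s = 0"
  shows "signed_commute True (stilde c g e a) (e_pair p q)"
    and "signed_commute False (stilde c g e a) (e_pair r s)"
    and "signed_commute True (stilde c g e a) e_vol"
proof -
  have Ge: "signed_commute False (g (refl_mat a)) (e j)" if "j \<in> {1..4}" for j
    using e_g_commute[OF that refl_mat_in_weyl[OF a]] by (simp add: signed_commute_False)
  note rules = signed_commute_rules Ge Ge[THEN signed_commute_sym] signed_commute_e_vol
    signed_commute_g_e_vol[OF refl_mat_in_weyl[OF a]]
  show "signed_commute True (stilde c g e a) (e_pair p q)"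
    unfolding stilde_eq root_pairing_block[OF pqrs ar] e_pair_def
    by (insert pqrs[unfolded blocks_def], (elim disjE conjE; hypsubst_thin; (rule rules | simp)+))
  show "signed_commute False (stilde c g e a) (e_pair r s)"
    unfolding stilde_eq root_pairing_block[OF pqrs ar] e_pair_def
    by (insert pqrs[unfolded blocks_def], (elim disjE conjE; hypsubst_thin; (rule rules | simp)+))
  show "signed_commute True (stilde c g e a) e_vol"
    unfolding stilde_eq root_pairing_block[OF pqrs ar]
    by (insert pqrs[unfolded blocks_def], (elim disjE conjE; hypsubst_thin; (rule rules | simp)+))
qed

lemma stilde_anticommute_stilde:
  assumes a: "a \<in> roots m1 m2" "a 3 = 0" "a 4 = 0" and b: "b \<in> roots m1 m2" "b 1 = 0" "b 2 = 0"
  shows "signed_commute True (stilde c g e a) (stilde c g e b)"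
proof -
  have Ge: "signed_commute False (g (refl_mat u)) (e j)" if "u \<in> roots m1 m2" "j \<in> {1..4}" for u j
    using e_g_commute[OF that(2) refl_mat_in_weyl[OF that(1)]] by (simp add: signed_commute_False)
  have "g (refl_mat a) * g (refl_mat b) = g (mat_mul (refl_mat a) (refl_mat b))"
    using g_mult refl_mat_in_weyl a(1) b(1) by simp
  also have "\<dots> = g (refl_mat b) * g (refl_mat a)"
    using refl_mat_mul_commute[OF roots_unit[OF a(1)] roots_unit[OF b(1)] a(2,3) b(2,3)]
      g_mult refl_mat_in_weyl a(1) b(1) by simp
  finally have GG: "signed_commute False (g (refl_mat a)) (g (refl_mat b))"
    by (simp add: signed_commute_False)
  have blk: "blocks 1 2 3 4" "blocks 3 4 1 2" by (simp_all add: blocks_def)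
  show ?thesis
    unfolding stilde_eq root_pairing_block[OF blk(1) a(2,3)] root_pairing_block[OF blk(2) b(2,3)]
    by (rule signed_commute_rules GG Ge[OF a(1)] Ge[OF b(1)] Ge[OF a(1), THEN signed_commute_sym]
        Ge[OF b(1), THEN signed_commute_sym] | simp)+
qed

lemma stilde_pair_commutes:
  assumes pqrs: "blocks p q r s"
    and a: "a \<in> roots m1 m2" "a r = 0" "a s = 0" and b: "b \<in> roots m1 m2" "b r = 0" "b s = 0"
  shows "signed_commute False (stilde c g e a * stilde c g e b) (P_pair p q)"
    and "signed_commute False (stilde c g e a * stilde c g e b) (P_pair r s)"
    and "signed_commute False (stilde c g e a * stilde c g e b) P_vol"
  unfolding P_pair_def Dx_comm_def P_vol_def xu_split[OF pqrs] Du_split[OF pqrs]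
  by (rule signed_commute_rules stilde_anticommute_blocks[OF a(1) pqrs a(2,3)]
      stilde_anticommute_blocks[OF b(1) pqrs b(2,3)] stilde_signs_clifford[OF a(1) pqrs a(2,3)]
      stilde_signs_clifford[OF b(1) pqrs b(2,3)])+

subsection \<open>Computing H_a and Z\<close>

lemma Pop_even:
  "Pop c x xi e y False
    = y - c (1/2) * (Du xi e * (xu x e * y - y * xu x e) + (xu x e * y - y * xu x e) * Du xi e)"
  by (simp add: Pop_def gcomm_def)

lemma Pop_scale: "Pop c x xi e (c \<mu> * y) False = c \<mu> * Pop c x xi e y False"
proof -
  define X where "X = xu x e"
  define D where "D = Du xi e"
  define W where "W = X * y - y * X"
  have "X * (c \<mu> * y) - (c \<mu> * y) * X = c \<mu> * W"
    by (simp add: W_def c_left_commute[of X] mult.assoc right_diff_distrib)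
  moreover have "D * (c \<mu> * W) + (c \<mu> * W) * D = c \<mu> * (D * W + W * D)"
    by (simp add: c_left_commute[of D] mult.assoc distrib_left)
  moreover have "c (1/2) * (c \<mu> * (D * W + W * D)) = c \<mu> * (c (1/2) * (D * W + W * D))"
    by (rule c_left_commute)
  ultimately show ?thesis
    unfolding Pop_even X_def[symmetric] D_def[symmetric] W_def[symmetric] by (simp add: right_diff_distrib)
qed

lemma Pop_e_pair:
  assumes pqrs: "blocks p q r s"
  shows "Pop c x xi e (e_pair p q) False = P_pair p q"
proof -
  have signs: "signed_commute True (e_pair p q) (xu_blk p q)" "signed_commute False (e_pair p q) (xu_blk r s)"
    "signed_commute True (e_pair p q) (Du_blk p q)" "signed_commute False (e_pair p q) (Du_blk r s)"
    "signed_commute True (Du_blk r s) (xu_blk p q)"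
    by (insert pqrs[unfolded blocks_def], (elim disjE conjE; hypsubst_thin;
        unfold e_pair_def xu_blk_def Du_blk_def; (rule signed_commute_rules | simp)+)+)
  have "Pop c x xi e (e_pair p q) False = e_pair p q - c (1/2) * (2 * (Dx_comm p q * e_pair p q))"
    unfolding Pop_even xu_split[OF pqrs] Du_split[OF pqrs] Dx_comm_def
      anticommutator_commutator_split[OF signs[unfolded signed_commute_True signed_commute_False]] ..
  also have "\<dots> = P_pair p q"
    by (simp only: c_half) (simp add: P_pair_def left_diff_distrib)
  finally show ?thesis .
qed

lemma Pop_e_vol: "Pop c x xi e e_vol False = P_vol"
proof -
  have "signed_commute True e_vol (xu x e)" "signed_commute True e_vol (Du xi e)"
    unfolding xu_def Du_def sum_1_to_4
    by (rule signed_commute_rules signed_commute_e_vol[THEN signed_commute_sym] | simp)+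
  then have "Pop c x xi e e_vol False
      = e_vol - c (1/2) * (2 * ((Du xi e * xu x e - xu x e * Du xi e) * e_vol))"
    unfolding Pop_even using anticommutator_commutator_split[of e_vol "xu x e" 0 "Du xi e" 0]
    by (simp add: signed_commute_True)
  also have "\<dots> = P_vol"
    by (simp only: c_half) (simp add: P_vol_def left_diff_distrib)
  finally show ?thesis .
qed

lemma gwedge_two: "gwedge c e [u, v] = c (1/2) * (gvec c e u * gvec c e v - gvec c e v * gvec c e u)"
proof -
  have ne: "id \<noteq> Transposition.transpose (0::nat) 1"
    by (metis id_apply transpose_apply_first zero_neq_one)
  have len: "length [u, v] = 2" and upt2: "[0..<2] = [0::nat, 1]"
    by (simp_all add: upt_rec)
  show ?thesis
    unfolding gwedge_def len permutations_of_two upt2 using ne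
    by (simp add: sign_swap_id c_one c_minus)
qed

lemma gvec_zplus_zminus:
  assumes "a = 1 \<or> a = 2"
  shows "gvec c e (zplus a) = e (2 * a - 1) + c \<i> * e (2 * a)"
    and "gvec c e (zminus a) = e (2 * a - 1) + c (- \<i>) * e (2 * a)"
  using assms unfolding gvec_def zplus_def zminus_def sum_1_to_4 by (auto simp: c_one c_zero)

lemma clifford_pair_commutator:
  assumes pq: "p \<in> {1..4}" "q \<in> {1..4}" "p \<noteq> q"
  shows "(e p + c l * e q) * (e p + c n * e q) - (e p + c n * e q) * (e p + c l * e q)
    = c (2 * (n - l)) * e_pair p q"
proof -
  have prod: "(e p + c u * e q) * (e p + c v * e q) = 1 + c v * e_pair p q - c u * e_pair p q + c (u * v)" for u v
  proof -
    have "(e p + c u * e q) * (e p + c v * e q)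
        = e p * e p + c v * (e p * e q) + c u * (e q * e p) + c u * (c v * (e q * e q))"
      by (simp add: distrib_left distrib_right add.assoc c_left_commute[of "e p"] c_left_commute[of "e q"] mult.assoc)
    then show ?thesis
      using pq by (simp add: e_square e_anticommute[of q p] e_pair_def c_mult)
  qed
  show ?thesis
    unfolding prod by (simp add: c_mult c_numeral c_diff mult.commute algebra_simps mult_2)
qed

lemma gwedge_zplus_zminus:
  assumes "a = 1 \<or> a = 2"
  shows "gwedge c e [zplus a, zminus a] = c (- 2 * \<i>) * e_pair (2 * a - 1) (2 * a)"
proof -
  have "gwedge c e [zplus a, zminus a] = c (1/2) * (c (2 * (- \<i> - \<i>)) * e_pair (2 * a - 1) (2 * a))"
    unfolding gwedge_two gvec_zplus_zminus[OF assms]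
    using assms by (subst clifford_pair_commutator) auto
  also have "\<dots> = c (- 2 * \<i>) * e_pair (2 * a - 1) (2 * a)"
    by (simp add: mult.assoc[symmetric] c_mult[symmetric])
  finally show ?thesis .
qed

lemma H_eq_P_pair:
  assumes "a = 1 \<or> a = 2"
  shows "c (1/2) * Oop c x xi e [zplus a, zminus a] = c (\<i> / 2) * P_pair (2 * a - 1) (2 * a)"
proof -
  have "blocks (2 * a - 1) (2 * a) (5 - 2 * a) (6 - 2 * a)"
    using assms by (auto simp: blocks_def)
  then have "c (1/2) * Oop c x xi e [zplus a, zminus a]
      = - (c (1/2) * (c (1/2) * (c (- 2 * \<i>) * P_pair (2 * a - 1) (2 * a))))"
    unfolding Oop_def gwedge_zplus_zminus[OF assms] by (simp add: Pop_scale Pop_e_pair)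
  also have "\<dots> = c (\<i> / 2) * P_pair (2 * a - 1) (2 * a)"
    by (simp add: mult.assoc[symmetric] c_mult[symmetric]) (simp add: c_minus)
  finally show ?thesis .
qed

lemma gvec_basisv: "k \<in> {1..4} \<Longrightarrow> gvec c e (basisv k) = e k"
  unfolding gvec_def basisv_def atLeastAtMost_1_4 by (auto simp: c_one c_zero)

lemma gwedge_basis: "gwedge c e [basisv 1, basisv 2, basisv 3, basisv 4] = e_vol"
proof -
  define vs where "vs = [basisv 1, basisv 2, basisv 3, basisv 4]"
  define u where "u i = e (Suc i)" for i
  have gv: "gvec c e (vs ! i) = u i" if "i < 4" for i
  proof -
    have "i = 0 \<or> i = 1 \<or> i = 2 \<or> i = 3" using that by auto
    then show ?thesis
      unfolding u_def vs_def by (elim disjE) (simp_all add: gvec_basisv eval_nat_numeral)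
  qed
  have anti: "u i * u j = - (u j * u i)" if "i < 4" "j < 4" "i \<noteq> j" for i j
    unfolding u_def using that by (intro e_anticommute) auto
  have vol: "prod_list (map u [0..<4]) = e_vol"
    by (simp add: u_def e_vol_def upt_rec mult.assoc eval_nat_numeral)
  have each: "c (of_int (sign \<sigma>)) * prod_list (map (\<lambda>i. gvec c e (vs ! \<sigma> i)) [0..<4]) = e_vol"
    if \<sigma>: "\<sigma> permutes {0..<4}" for \<sigma>
  proof -
    have map: "map (\<lambda>i. gvec c e (vs ! \<sigma> i)) [0..<4] = map (\<lambda>i. u (\<sigma> i)) [0..<4]"
      using permutes_in_image[OF \<sigma>] by (intro map_cong) (auto simp: gv)
    have "prod_list (map (\<lambda>i. gvec c e (vs ! \<sigma> i)) [0..<4]) = of_int (sign \<sigma>) * e_vol"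
      unfolding map using prod_list_permute_anticommuting[where u = u, OF \<sigma> anti] vol by simp
    then show ?thesis
      by (simp add: c_of_int mult.assoc[symmetric] of_int_mult[symmetric])
  qed
  have len: "length vs = 4"
    by (simp add: vs_def)
  have "gwedge c e vs = c (1 / of_nat (fact 4)) * (\<Sum>\<sigma>\<in>{\<sigma>. \<sigma> permutes {0..<4::nat}}.
      c (of_int (sign \<sigma>)) * prod_list (map (\<lambda>i. gvec c e (vs ! \<sigma> i)) [0..<4]))"
    unfolding gwedge_def len ..
  also have "(\<Sum>\<sigma>\<in>{\<sigma>. \<sigma> permutes {0..<4::nat}}.
      c (of_int (sign \<sigma>)) * prod_list (map (\<lambda>i. gvec c e (vs ! \<sigma> i)) [0..<4]))
      = of_nat (fact 4) * e_vol"
    by (simp add: each card_permutations)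
  also have "c (1 / of_nat (fact 4)) * (of_nat (fact 4) * e_vol)
      = c (1 / of_nat (fact 4) * of_nat (fact 4)) * e_vol"
    by (simp only: c_mult c_of_nat mult.assoc)
  also have "(1 / of_nat (fact 4) * of_nat (fact 4) :: complex) = 1"
    by simp
  finally show ?thesis
    unfolding vs_def by (simp add: c_one)
qed

lemma Z_eq_P_vol: "Oop c x xi e [basisv 1, basisv 2, basisv 3, basisv 4] = - (c (1/2) * P_vol)"
  unfolding Oop_def gwedge_basis by (simp add: Pop_e_vol)

lemma t0_generators_commute:
  assumes a1: "a1 \<in> roots m1 m2" "a1 3 = 0" "a1 4 = 0" and a2: "a2 \<in> roots m1 m2" "a2 3 = 0" "a2 4 = 0"
    and b1: "b1 \<in> roots m1 m2" "b1 1 = 0" "b1 2 = 0" and b2: "b2 \<in> roots m1 m2" "b2 1 = 0" "b2 2 = 0"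
    and u: "u \<in> {P_pair 1 2, P_pair 3 4, P_vol,
      - (stilde c g e a1 * stilde c g e a2), - (stilde c g e b1 * stilde c g e b2)}"
    and v: "v \<in> {P_pair 1 2, P_pair 3 4, P_vol,
      - (stilde c g e a1 * stilde c g e a2), - (stilde c g e b1 * stilde c g e b2)}"
  shows "signed_commute False u v"
proof -
  have blk: "blocks 1 2 3 4" "blocks 3 4 1 2"
    by (simp_all add: blocks_def)
  note facts = P_pair_commute_P_pair[OF blk(1)] P_pair_commute_P_pair[OF blk(2)]
    P_pair_commute_P_vol[OF blk(1)] P_pair_commute_P_vol[OF blk(2)]
    stilde_pair_commutes[OF blk(1) a1 a2] stilde_pair_commutes[OF blk(2) b1 b2]
    stilde_anticommute_stilde[OF a1 b1] stilde_anticommute_stilde[OF a1 b2]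
    stilde_anticommute_stilde[OF a2 b1] stilde_anticommute_stilde[OF a2 b2]
  show ?thesis
    by (insert u v, (elim insertE emptyE; hypsubst_thin;
        (rule signed_commute_refl facts facts[THEN signed_commute_sym] signed_commute_rules | simp)+))
qed

end

theorem proposition4p2:
  fixes m1 m2 :: nat
    and \<kappa> :: "(nat \<Rightarrow> real) \<Rightarrow> complex"
    and c :: "complex \<Rightarrow> 'a::ring_1"
    and x xi e :: "nat \<Rightarrow> 'a"
    and g :: "(nat \<Rightarrow> nat \<Rightarrow> real) \<Rightarrow> 'a"
  assumes "0 < m1" and "0 < m2"
    and "\<forall>w\<in>weyl m1 m2. \<forall>a\<in>roots m1 m2. \<kappa> (mat_vec w a) = \<kappa> a"
    and "CH_model m1 m2 \<kappa> c x xi g e"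
  defines "H1 \<equiv> c (1/2) * Oop c x xi e [zplus 1, zminus 1]"
    and "H2 \<equiv> c (1/2) * Oop c x xi e [zplus 2, zminus 2]"
    and "Z \<equiv> Oop c x xi e [basisv 1, basisv 2, basisv 3, basisv 4]"
    and "r1 \<equiv> - (stilde c g e (alpha m1 m1) * stilde c g e (alpha m1 1))"
    and "r2 \<equiv> - (stilde c g e (beta m2 m2) * stilde c g e (beta m2 1))"
  shows "\<forall>u\<in>set [H1, H2, Z, r1, r2]. \<forall>v\<in>set [H1, H2, Z, r1, r2]. u * v = v * u"
proof -
  interpret cherednik_clifford_model m1 m2 \<kappa> c x xi e g
    by (rule cherednik_clifford_model.intro) (rule assms(4))
  have roots: "alpha m1 m1 \<in> roots m1 m2" "alpha m1 1 \<in> roots m1 m2"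
    "beta m2 m2 \<in> roots m1 m2" "beta m2 1 \<in> roots m1 m2"
    using assms(1,2) unfolding roots_def by auto
  have vanish: "alpha m p 3 = 0" "alpha m p 4 = 0" "beta m p 1 = 0" "beta m p 2 = 0" for m p
    by (simp_all add: alpha_def beta_def)
  note gens = t0_generators_commute[OF roots(1) vanish(1,2) roots(2) vanish(1,2)
      roots(3) vanish(3,4) roots(4) vanish(3,4), folded r1_def r2_def]
  have H: "H1 = c (\<i> / 2) * P_pair 1 2" "H2 = c (\<i> / 2) * P_pair 3 4"
    using H_eq_P_pair[of 1] H_eq_P_pair[of 2] unfolding H1_def H2_def by simp_all
  have Z: "Z = - (c (1/2) * P_vol)"
    unfolding Z_def by (rule Z_eq_P_vol)
  show ?thesis
    unfolding H Z signed_commute_False[symmetric] list.set ball_simps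
    by (intro conjI TrueI; (rule signed_commute_rules gens | simp)+)
qed

end
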